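(* Consider the multi-machine power system described in the context, and fix $\omega_0>0$ and $i_r^*\in\mathbb{R}^n_{>0}$, with zero-dynamics manifold $\Omega=\{x\in\mathcal{X}: i_r=i_r^*,\ \omega=\omega_0\mathbb{1}\}$. The unique control action $u=u^\star(x)=(u_m^\star(x),u_r^\star(x))$ which renders $\Omega$ invariant for the system is given by $$u_r^\star(x)=R_r i_r^*+(L_m\otimes \mathsf{e}_1^\top)\mathbf{R}_\theta^\top L_s^{-1}(-Z_s i_s+v),\qquad u_m^\star(x)=D\omega_0\mathbb{1}-I_r^*(L_m\otimes\mathsf{e}_2^\top)\mathbf{R}_\theta^\top i_s,$$ where $Z_s=R_s+\boldsymbol{j}\omega_0 L_s$ and $I_r^*=\mathrm{diag}(i_{r_i}^* )$.
   Context: Notation: $j=\begin{bsmallmatrix}0&-1\\1&0\end{bsmallmatrix}$, $I_2$ the $2\times2$ identity, $\mathsf{e}_1=(1,0)^\top$, $\mathsf{e}_2=(0,1)^\top$, $\mathbb{1}\in\mathbb{R}^n$ the all-ones vector, $\otimes$ the Kronecker product, $\boldsymbol{j}=I\otimes j$ (identity of the dimension dictated by context). For $\theta=(\theta_1,\dots,\theta_n)\in\mathbb{T}^n$, $R_{\theta_i}=\begin{bsmallmatrix}\cos\theta_i&-\sin\theta_i\\ \sin\theta_i&\cos\theta_i\end{bsmallmatrix}$ and $\mathbf{R}_\theta=\mathrm{blkdiag}(R_{\theta_1},\dots,R_{\theta_n})$. System: $n$ synchronous machines and $m$ transmission lines on a connected undirected graph with signed incidence matrix $E\in\mathbb{R}^{n\times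 m}$; $\mathbf{E}=E\otimes I_2$. Parameters (all scalar entries positive): $M=\mathrm{diag}(M_i)$, $D=\mathrm{diag}(D_i)$, $R_r=\mathrm{diag}(R_{r_i})$, $L_r=\mathrm{diag}(L_{r_i})$, $L_m=\mathrm{diag}(L_{m_i})$ in $\mathbb{R}^{n\times n}$; $R_s=\mathrm{diag}(R_{s_i})\otimes I_2$, $L_s=\mathrm{diag}(L_{s_i})\otimes I_2$, $C=\mathrm{diag}(C_i)\otimes I_2$, $G=\mathrm{diag}(G_i)\otimes I_2$ in $\mathbb{R}^{2n\times 2n}$; $L_{\mathsf t}=\mathrm{diag}(L_{\mathsf t_k})\otimes I_2$, $R_{\mathsf t}=\mathrm{diag}(R_{\mathsf t_k})\otimes I_2$ in $\mathbb{R}^{2m\times2m}$; and $L_{s_i}L_{r_i}-L_{m_i}^2>0$. State $x=(M\omega,\theta,\lambda_r,\lambda_s,Cv,L_{\mathsf t}i_{\mathsf t})\in\mathcal{X}=\mathbb{R}^n\times\mathbb{T}^n\times\mathbb{R}^n\times\mathbb{R}^{2n}\times\mathbb{R}^{2n}\times\mathbb{R}^{2m}$, input $u=(u_m,u_r)\in\mathbb{R}^n\times\mathbb{R}^n$. Stator currents $i_s\in\mathbb{R}^{2n}$ and rotor currents $i_r\in\mathbb{R}^n$ are defined from the fluxes by $\lambda_s=L_s i_s+\mathbf{R}_\theta(L_m\otimes\mathsf{e}_1)i_r$, $\lambda_r=L_r i_r+(L_m\otimes\mathsf{e}_1^\top)\mathbf{R}_\theta^\top i_s$; electrical torque $\tau_e=-I_r(L_m\otimes\mathsf{e}_2^\top)\mathbf{R}_\theta^\top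 i_s$ with $I_r=\mathrm{diag}(i_{r_i})$. Dynamics: $M\dot\omega=-D\omega-\tau_e+u_m$, $\dot\theta=\omega$, $\dot\lambda_r=-R_r i_r+u_r$, $\dot\lambda_s=-R_s i_s+v$, $C\dot v=-Gv-\mathbf{E}i_{\mathsf t}-i_s$, $L_{\mathsf t}\tfrac{d}{dt}i_{\mathsf t}=-R_{\mathsf t}i_{\mathsf t}+\mathbf{E}^\top v$. *)

theory Defs
  imports "HOL-Analysis.Analysis"
begin

text \<open>Machines are indexed by a finite type 'n, transmission lines by a finite type 'm.
  Per-machine 2-vectors (dq/alpha-beta quantities) are elements of real^2.
  Block-diagonal matrices (the Kronecker products with I_2 or e_1, e_2) are written
  out machine by machine.\<close>

record ('n::finite, 'm::finite) params =
  pM  :: "real^'n"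
  pD  :: "real^'n"
  pRr :: "real^'n"
  pLr :: "real^'n"
  pLm :: "real^'n"
  pRs :: "real^'n"
  pLs :: "real^'n"
  pC  :: "real^'n"
  pG  :: "real^'n"
  pLt :: "real^'m"
  pRt :: "real^'m"
  pE  :: "real^'m^'n"

definition rot :: "real \<Rightarrow> real^2^2" where
  "rot th = vector [vector [cos th, - sin th], vector [sin th, cos th]]"

definition jmat :: "real^2^2" where
  "jmat = vector [vector [0, -1], vector [1, 0]]"

definition e1 :: "real^2" where "e1 = vector [1, 0]"

definition incidence_matrix :: "real^'m^'n \<Rightarrow> bool" where
  "incidence_matrix E \<longleftrightarrow>
     (\<forall>k. \<exists>a b. a \<noteq> b \<and> E $ a $ k = 1 \<and> E $ b $ k = -1 \<and>
            (\<forall>i. i \<noteq> a \<and> i \<noteq> b \<longrightarrow> E $ i $ k = 0))"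

definition graph_adj :: "real^'m^'n \<Rightarrow> ('n \<times> 'n) set" where
  "graph_adj E = {(a, b). a \<noteq> b \<and> (\<exists>k. E $ a $ k \<noteq> 0 \<and> E $ b $ k \<noteq> 0)}"

definition connected_graph :: "real^'m^'n \<Rightarrow> bool" where
  "connected_graph E \<longleftrightarrow> (\<forall>a b. (a, b) \<in> (graph_adj E)\<^sup>*)"

definition valid_params :: "('n::finite, 'm::finite) params \<Rightarrow> bool" where
  "valid_params p \<longleftrightarrow>
     (\<forall>i. pM p $ i > 0 \<and> pD p $ i > 0 \<and> pRr p $ i > 0 \<and> pLr p $ i > 0 \<and> pLm p $ i > 0 \<and>
          pRs p $ i > 0 \<and> pLs p $ i > 0 \<and> pC p $ i > 0 \<and> pG p $ i > 0 \<and>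
          pLs p $ i * pLr p $ i - (pLm p $ i)\<^sup>2 > 0) \<and>
     (\<forall>k. pLt p $ k > 0 \<and> pRt p $ k > 0) \<and>
     incidence_matrix (pE p) \<and> connected_graph (pE p)"

text \<open>Flux/current relations:
  lambda_s = L_s i_s + R_theta (L_m \<otimes> e1) i_r,  lambda_r = L_r i_r + (L_m \<otimes> e1^T) R_theta^T i_s.\<close>
definition currents ::
  "('n::finite, 'm::finite) params \<Rightarrow> real^'n \<Rightarrow> real^'n \<Rightarrow> (real^2)^'n \<Rightarrow> (real^2)^'n \<Rightarrow> real^'n \<Rightarrow> bool" where
  "currents p th lr ls is ir \<longleftrightarrow>
     (\<forall>i. ls $ i = pLs p $ i *\<^sub>R is $ i + (pLm p $ i * ir $ i) *\<^sub>R (rot (th $ i) *v e1) \<and>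
          lr $ i = pLr p $ i * ir $ i + pLm p $ i * ((transpose (rot (th $ i)) *v is $ i) $ 1))"

text \<open>Electrical torque tau_e = - I_r (L_m \<otimes> e2^T) R_theta^T i_s.\<close>
definition torque :: "('n::finite, 'm::finite) params \<Rightarrow> real^'n \<Rightarrow> (real^2)^'n \<Rightarrow> real^'n \<Rightarrow> real^'n" where
  "torque p th is ir = (\<chi> i. - (ir $ i * pLm p $ i * ((transpose (rot (th $ i)) *v is $ i) $ 2)))"

text \<open>A solution of the system on the time interval [0, \<infinity>) with input (um, ur);
  the angle theta is represented by a lift to real^'n.  The currents is, ir are
  the ones defined from the fluxes.\<close>
definition is_solution ::
  "('n::finite, 'm::finite) params \<Rightarrow>
   (real \<Rightarrow> real^'n) \<Rightarrow> (real \<Rightarrow> real^'n) \<Rightarrow> (real \<Rightarrow> real^'n) \<Rightarrow> (real \<Rightarrow> (real^2)^'n) \<Rightarrow>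
   (real \<Rightarrow> (real^2)^'n) \<Rightarrow> (real \<Rightarrow> (real^2)^'m) \<Rightarrow>
   (real \<Rightarrow> (real^2)^'n) \<Rightarrow> (real \<Rightarrow> real^'n) \<Rightarrow>
   (real \<Rightarrow> real^'n) \<Rightarrow> (real \<Rightarrow> real^'n) \<Rightarrow> bool" where
  "is_solution p w th lr ls v it is ir um ur \<longleftrightarrow>
     (\<forall>t\<in>{0..}.
        currents p (th t) (lr t) (ls t) (is t) (ir t) \<and>
        (w has_vector_derivative
           (\<chi> i. (- pD p $ i * w t $ i - torque p (th t) (is t) (ir t) $ i + um t $ i) / pM p $ i))
           (at t within {0..}) \<and>
        (th has_vector_derivative w t) (at t within {0..}) \<and>
        (lr has_vector_derivative (\<chi> i. - pRr p $ i * ir t $ i + ur t $ i)) (at t within {0..}) \<and>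
        (ls has_vector_derivative (\<chi> i. - pRs p $ i *\<^sub>R is t $ i + v t $ i)) (at t within {0..}) \<and>
        (v has_vector_derivative
           (\<chi> i. (1 / pC p $ i) *\<^sub>R
                  (- pG p $ i *\<^sub>R v t $ i - (\<Sum>k\<in>UNIV. pE p $ i $ k *\<^sub>R it t $ k) - is t $ i)))
           (at t within {0..}) \<and>
        (it has_vector_derivative
           (\<chi> k. (1 / pLt p $ k) *\<^sub>R
                  (- pRt p $ k *\<^sub>R it t $ k + (\<Sum>i\<in>UNIV. pE p $ i $ k *\<^sub>R v t $ i))))
           (at t within {0..}))"

definition in_Omega :: "real \<Rightarrow> real^'n \<Rightarrow> real^'n \<Rightarrow> real^'n \<Rightarrow> bool" where
  "in_Omega w0 irs w ir \<longleftrightarrow> ir = irs \<and> w = (\<chi> i. w0)"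

definition ur_star :: "('n::finite, 'm::finite) params \<Rightarrow> real \<Rightarrow> real^'n \<Rightarrow> real^'n \<Rightarrow> (real^2)^'n \<Rightarrow> (real^2)^'n \<Rightarrow> real^'n" where
  "ur_star p w0 irs th is v =
     (\<chi> i. pRr p $ i * irs $ i +
            pLm p $ i * ((transpose (rot (th $ i)) *v
               ((1 / pLs p $ i) *\<^sub>R
                  (- (pRs p $ i *\<^sub>R is $ i + (w0 * pLs p $ i) *\<^sub>R (jmat *v is $ i)) + v $ i))) $ 1))"

definition um_star :: "('n::finite, 'm::finite) params \<Rightarrow> real \<Rightarrow> real^'n \<Rightarrow> real^'n \<Rightarrow> (real^2)^'n \<Rightarrow> real^'n" where
  "um_star p w0 irs th is =
     (\<chi> i. pD p $ i * w0 - irs $ i * pLm p $ i * ((transpose (rot (th $ i)) *v is $ i) $ 2))"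

end

theory Submission
  imports Defs
begin

text \<open>
  Each machine can be treated separately.
  On Omega the speed and the rotor current are constant, so their derivatives vanish: the swing
  equation then forces u_m, and differentiating the rotor current, recovered from the fluxes as
  (L_s L_r - L_m^2) i_r = L_s lambda_r - L_m (R_theta^T lambda_s)_1, forces u_r.
  Conversely, under u* the errors x = i_r - i_r* and y = omega - omega_0 of a machine satisfy
  ((L_s L_r - L_m^2) / L_s) x' = - R_r x - c y  and  M y' = - D y + c x,
  where c = L_m (R_theta^T i_s)_2; so the energy ((L_s L_r - L_m^2) / L_s) x^2 + M y^2 does not increase; it vanishes at time 0.
\<close>

lemma vector_matrix_mult_rot_nth:
  "(x v* rot th) $ 1 = cos th * x $ 1 + sin th * x $ 2"
  "(x v* rot th) $ 2 = cos th * x $ 2 - sin th * x $ 1"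
  by (simp_all add: rot_def vector_matrix_mult_def sum_2 vector_def)

lemma rot_e1_nth [simp]: "(rot th *v e1) $ 1 = cos th" "(rot th *v e1) $ 2 = sin th"
  by (simp_all add: rot_def e1_def matrix_vector_mult_def sum_2 vector_def)

lemma e1_nth [simp]: "e1 $ 1 = 1" "e1 $ 2 = 0"
  by (simp_all add: e1_def)

lemma jmat_nth [simp]: "(jmat *v x) $ 1 = - x $ 2" "(jmat *v x) $ 2 = x $ 1"
  by (simp_all add: jmat_def matrix_vector_mult_def sum_2 vector_def)

lemma rot_e1_rot_frame [simp]: "(rot th *v e1) v* rot th = e1"
  by (simp add: vec_eq_iff forall_2 vector_matrix_mult_rot_nth flip: power2_eq_square)

text \<open>The term L_m e_1^T R_theta^T L_s^-1 (v - (R_s + j w L_s) i) of u_r*, with the speed w as a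
  parameter: the rate of the rotor flux forced by the stator when i_r is constant.\<close>

definition induced_rotor_flux_rate ::
    "real \<Rightarrow> real \<Rightarrow> real \<Rightarrow> real \<Rightarrow> real \<Rightarrow> real^2 \<Rightarrow> real^2 \<Rightarrow> real"
  where "induced_rotor_flux_rate Lm Rs Ls w th i v =
           Lm * (((1 / Ls) *\<^sub>R (- (Rs *\<^sub>R i + (w * Ls) *\<^sub>R (jmat *v i)) + v)) v* rot th) $ 1"

lemma induced_rotor_flux_rate_eq:
  assumes "Ls \<noteq> 0"
  shows "induced_rotor_flux_rate Lm Rs Ls w th i v
           = Lm * (w * Ls * (i v* rot th) $ 2 + ((- Rs *\<^sub>R i + v) v* rot th) $ 1) / Ls"
  using assms by (simp add: induced_rotor_flux_rate_def vector_matrix_mult_rot_nth field_simps)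

lemma at_within_Ici_nontrivial:
  fixes a t :: real
  assumes "a \<le> t"
  shows "at t within {a..} \<noteq> bot"
proof -
  have "at t within {t..} \<le> at t within {a..}"
    using assms by (intro at_le) auto
  then show ?thesis
    by (metis at_within_Ici_at_right bot.extremum_uniqueI trivial_limit_at_right_real)
qed

lemma has_vector_derivative_vec_nth:
  "(f has_vector_derivative f') F \<Longrightarrow> ((\<lambda>t. f t $ i) has_vector_derivative f' $ i) F"
  using bounded_linear.has_vector_derivative[OF bounded_linear_vec_nth] .

lemma has_real_derivative_vec_nth:
  "(f has_vector_derivative f') F \<Longrightarrow> ((\<lambda>t. f t $ i) has_real_derivative f' $ i) F"
  by (simp add: has_real_derivative_iff_has_vector_derivative has_vector_derivative_vec_nth)

lemma has_real_derivative_rot_frame_fst: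
  assumes "(th has_real_derivative w) (at t within S)"
    and "(x has_vector_derivative x') (at t within S)"
  shows "((\<lambda>s. (x s v* rot (th s)) $ 1) has_real_derivative
            w * (x t v* rot (th t)) $ 2 + (x' v* rot (th t)) $ 1) (at t within S)"
proof -
  have "((\<lambda>s. cos (th s) * x s $ 1 + sin (th s) * x s $ 2) has_real_derivative
            w * (cos (th t) * x t $ 2 - sin (th t) * x t $ 1)
            + (cos (th t) * x' $ 1 + sin (th t) * x' $ 2))
          (at t within S)"
    using assms(1) has_real_derivative_vec_nth[OF assms(2)]
    by (auto intro!: derivative_eq_intros simp: algebra_simps)
  then show ?thesis by (simp add: vector_matrix_mult_rot_nth)
qed

lemma has_real_derivative_eq_0_if_constant_on:
  fixes f :: "real \<Rightarrow> real"
  assumes "(f has_real_derivative d) (at t within S)" and "at t within S \<noteq> bot"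
    and "t \<in> S" and "\<And>s. s \<in> S \<Longrightarrow> f s = c"
  shows "d = 0"
proof -
  have "((\<lambda>_. c) has_real_derivative d) (at t within S)"
    by (rule has_field_derivative_transform_within[OF assms(1) zero_less_one assms(3)])
       (simp add: assms(4))
  then show ?thesis
    by (rule has_field_derivative_unique[OF _ DERIV_const assms(2)])
qed

lemma nonincreasing_on_Ici_if_derivative_nonpos:
  fixes V V' :: "real \<Rightarrow> real"
  assumes deriv: "\<And>s. s \<ge> a \<Longrightarrow> (V has_real_derivative V' s) (at s within {a..})"
    and nonpos: "\<And>s. s \<ge> a \<Longrightarrow> V' s \<le> 0" and "t \<ge> a"
  shows "V t \<le> V a"
proof (rule DERIV_nonpos_imp_decreasing_open[OF \<open>t \<ge> a\<close>])
  fix s :: real assume "a < s"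
  then have "at s within {a..} = at s"
    by (intro at_within_open_subset[of _ "{a<..}"]) auto
  with deriv[of s] nonpos[of s] \<open>a < s\<close> show "\<exists>y. DERIV V s :> y \<and> y \<le> 0" by auto
next
  have "continuous_on {a..} V"
    using deriv by (intro DERIV_continuous_on) auto
  then show "continuous_on {a..t} V"
    by (rule continuous_on_subset) auto
qed

lemma damped_skew_system_stays_at_zero:
  fixes x y x' y' c :: "real \<Rightarrow> real"
  assumes "a > 0" "b > 0" "R \<ge> 0" "D \<ge> 0"
    and x': "\<And>s. s \<ge> 0 \<Longrightarrow> (x has_real_derivative x' s) (at s within {0..})"
    and y': "\<And>s. s \<ge> 0 \<Longrightarrow> (y has_real_derivative y' s) (at s within {0..})"
    and x'_eq: "\<And>s. s \<ge> 0 \<Longrightarrow> a * x' s = - R * x s - c s * y s"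
    and y'_eq: "\<And>s. s \<ge> 0 \<Longrightarrow> b * y' s = - D * y s + c s * x s"
    and "x 0 = 0" "y 0 = 0" "t \<ge> 0"
  shows "x t = 0 \<and> y t = 0"
proof -
  define V where "V s = a * (x s)\<^sup>2 + b * (y s)\<^sup>2" for s
  have V': "(V has_real_derivative - 2 * (R * (x s)\<^sup>2 + D * (y s)\<^sup>2)) (at s within {0..})"
    if "s \<ge> 0" for s
  proof -
    have "(V has_real_derivative 2 * x s * (a * x' s) + 2 * y s * (b * y' s)) (at s within {0..})"
      unfolding V_def
      by (rule derivative_eq_intros x'[OF that] y'[OF that] refl)+ (simp add: algebra_simps)
    then show ?thesis
      using x'_eq[OF that] y'_eq[OF that] by (simp add: algebra_simps power2_eq_square)
  qed
  have V'_nonpos: "- 2 * (R * (x s)\<^sup>2 + D * (y s)\<^sup>2) \<le> 0" for s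
  proof -
    have "0 \<le> R * (x s)\<^sup>2 + D * (y s)\<^sup>2"
      using \<open>R \<ge> 0\<close> \<open>D \<ge> 0\<close> by (simp add: add_nonneg_nonneg)
    then show ?thesis by simp
  qed
  have "V t \<le> V 0"
    by (rule nonincreasing_on_Ici_if_derivative_nonpos[OF V' V'_nonpos \<open>t \<ge> 0\<close>])
  then have "a * (x t)\<^sup>2 + b * (y t)\<^sup>2 \<le> 0"
    using \<open>x 0 = 0\<close> \<open>y 0 = 0\<close> by (simp add: V_def)
  moreover have "a * (x t)\<^sup>2 \<ge> 0" "b * (y t)\<^sup>2 \<ge> 0"
    using \<open>a > 0\<close> \<open>b > 0\<close> by simp_all
  ultimately have "a * (x t)\<^sup>2 = 0" "b * (y t)\<^sup>2 = 0"
    by linarith+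
  then show ?thesis
    using \<open>a > 0\<close> \<open>b > 0\<close> by simp
qed

text \<open>One machine along a solution. Note that x v* rot theta is R_theta^T x, the stator
  quantity x in rotor (dq) coordinates.\<close>

locale machine_trajectory =
  fixes M D Rr Lr Lm Rs Ls :: real
    and w th lr ir um ur :: "real \<Rightarrow> real"
    and ls "is" v :: "real \<Rightarrow> real^2"
  assumes Ls_pos: "Ls > 0" and det_pos: "Ls * Lr - Lm\<^sup>2 > 0" and M_pos: "M > 0"
    and stator_flux: "\<And>t. t \<ge> 0 \<Longrightarrow> ls t = Ls *\<^sub>R is t + (Lm * ir t) *\<^sub>R (rot (th t) *v e1)"
    and rotor_flux: "\<And>t. t \<ge> 0 \<Longrightarrow> lr t = Lr * ir t + Lm * (is t v* rot (th t)) $ 1"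
    and speed_deriv: "\<And>t. t \<ge> 0 \<Longrightarrow> (w has_real_derivative
          (- D * w t + Lm * ir t * (is t v* rot (th t)) $ 2 + um t) / M) (at t within {0..})"
    and angle_deriv: "\<And>t. t \<ge> 0 \<Longrightarrow> (th has_real_derivative w t) (at t within {0..})"
    and rotor_flux_deriv: "\<And>t. t \<ge> 0 \<Longrightarrow>
          (lr has_real_derivative - Rr * ir t + ur t) (at t within {0..})"
    and stator_flux_deriv: "\<And>t. t \<ge> 0 \<Longrightarrow>
          (ls has_vector_derivative - Rs *\<^sub>R is t + v t) (at t within {0..})"
begin

lemma Ls_nonzero: "Ls \<noteq> 0"
  using Ls_pos by simp

lemma stator_flux_rot_frame:
  assumes "t \<ge> 0"
  shows "ls t v* rot (th t) = Ls *\<^sub>R (is t v* rot (th t)) + (Lm * ir t) *\<^sub>R e1"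
  using stator_flux[OF assms] by (simp add: vector_matrix_left_distrib scaleR_vector_matrix_assoc)

lemma rotor_current_from_fluxes:
  assumes "t \<ge> 0"
  shows "(Ls * Lr - Lm\<^sup>2) * ir t = Ls * lr t - Lm * (ls t v* rot (th t)) $ 1"
proof -
  have "(ls t v* rot (th t)) $ 1 = Ls * (is t v* rot (th t)) $ 1 + Lm * ir t"
    using stator_flux_rot_frame[OF assms] by simp
  then show ?thesis
    using rotor_flux[OF assms] by (simp add: algebra_simps power2_eq_square)
qed

lemma rotor_current_deriv:
  assumes "t \<ge> 0"
  shows "(ir has_real_derivative
            Ls / (Ls * Lr - Lm\<^sup>2)
            * (- Rr * ir t + ur t - induced_rotor_flux_rate Lm Rs Ls (w t) (th t) (is t) (v t)))
            (at t within {0..})"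
proof -
  have "((\<lambda>s. (ls s v* rot (th s)) $ 1) has_real_derivative
          w t * (ls t v* rot (th t)) $ 2 + ((- Rs *\<^sub>R is t + v t) v* rot (th t)) $ 1)
          (at t within {0..})"
    by (rule has_real_derivative_rot_frame_fst[OF angle_deriv[OF assms] stator_flux_deriv[OF assms]])
  then have flux_expr_deriv:
      "((\<lambda>s. (Ls * lr s - Lm * (ls s v* rot (th s)) $ 1) / (Ls * Lr - Lm\<^sup>2)) has_real_derivative
          (Ls * (- Rr * ir t + ur t)
           - Lm * (w t * (ls t v* rot (th t)) $ 2 + ((- Rs *\<^sub>R is t + v t) v* rot (th t)) $ 1))
          / (Ls * Lr - Lm\<^sup>2)) (at t within {0..})"
    by (intro DERIV_cdivide DERIV_diff DERIV_cmult[OF rotor_flux_deriv[OF assms]] DERIV_cmult)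
  have flux_expr_eq: "(Ls * lr s - Lm * (ls s v* rot (th s)) $ 1) / (Ls * Lr - Lm\<^sup>2) = ir s"
    if "s \<in> {0..}" for s
    using rotor_current_from_fluxes[of s] that det_pos by (simp add: divide_eq_eq mult.commute)
  have "(ir has_real_derivative
          (Ls * (- Rr * ir t + ur t)
           - Lm * (w t * (ls t v* rot (th t)) $ 2 + ((- Rs *\<^sub>R is t + v t) v* rot (th t)) $ 1))
          / (Ls * Lr - Lm\<^sup>2)) (at t within {0..})"
    by (rule has_field_derivative_transform_within[OF flux_expr_deriv zero_less_one])
       (use assms flux_expr_eq in auto)
  then show ?thesis
    unfolding induced_rotor_flux_rate_eq[OF Ls_nonzero]
    by (rule DERIV_cong)
       (use Ls_pos det_pos in \<open>simp add: stator_flux_rot_frame[OF assms] field_simps\<close>)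
qed

lemma inputs_on_manifold:
  assumes on_manifold: "\<And>s. s \<ge> 0 \<Longrightarrow> ir s = irs \<and> w s = w0" and "t \<ge> 0"
  shows "um t = D * w0 - irs * Lm * (is t v* rot (th t)) $ 2"
    and "ur t = Rr * irs + induced_rotor_flux_rate Lm Rs Ls w0 (th t) (is t) (v t)"
proof -
  have nontrivial: "at t within {0..} \<noteq> bot"
    using \<open>t \<ge> 0\<close> by (rule at_within_Ici_nontrivial)
  have "(- D * w t + Lm * ir t * (is t v* rot (th t)) $ 2 + um t) / M = 0"
    by (rule has_real_derivative_eq_0_if_constant_on[OF speed_deriv[OF \<open>t \<ge> 0\<close>] nontrivial])
       (use on_manifold \<open>t \<ge> 0\<close> in auto)
  then show "um t = D * w0 - irs * Lm * (is t v* rot (th t)) $ 2"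
    using on_manifold[OF \<open>t \<ge> 0\<close>] M_pos by (simp add: field_simps)
  have "Ls / (Ls * Lr - Lm\<^sup>2)
          * (- Rr * ir t + ur t - induced_rotor_flux_rate Lm Rs Ls (w t) (th t) (is t) (v t)) = 0"
    by (rule has_real_derivative_eq_0_if_constant_on[OF rotor_current_deriv[OF \<open>t \<ge> 0\<close>] nontrivial])
       (use on_manifold \<open>t \<ge> 0\<close> in auto)
  then show "ur t = Rr * irs + induced_rotor_flux_rate Lm Rs Ls w0 (th t) (is t) (v t)"
    using on_manifold[OF \<open>t \<ge> 0\<close>] Ls_pos det_pos by simp
qed

lemma manifold_invariant:
  assumes "Rr \<ge> 0" and "D \<ge> 0"
    and um: "\<And>s. s \<ge> 0 \<Longrightarrow> um s = D * w0 - irs * Lm * (is s v* rot (th s)) $ 2"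
    and ur: "\<And>s. s \<ge> 0 \<Longrightarrow>
          ur s = Rr * irs + induced_rotor_flux_rate Lm Rs Ls w0 (th s) (is s) (v s)"
    and "ir 0 = irs" and "w 0 = w0" and "t \<ge> 0"
  shows "ir t = irs \<and> w t = w0"
proof -
  define iq where "iq s = (is s v* rot (th s)) $ 2" for s
  have "ir t - irs = 0 \<and> w t - w0 = 0"
  proof (rule damped_skew_system_stays_at_zero
      [where x = "\<lambda>s. ir s - irs" and y = "\<lambda>s. w s - w0" and c = "\<lambda>s. Lm * iq s"
         and a = "(Ls * Lr - Lm\<^sup>2) / Ls" and b = M and R = Rr and D = D])
    fix s :: real assume "s \<ge> 0"
    show "((\<lambda>s. ir s - irs) has_real_derivative
            Ls / (Ls * Lr - Lm\<^sup>2)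
            * (- Rr * ir s + ur s - induced_rotor_flux_rate Lm Rs Ls (w s) (th s) (is s) (v s)))
            (at s within {0..})"
      using rotor_current_deriv[OF \<open>s \<ge> 0\<close>] by (auto intro!: derivative_eq_intros)
    show "(Ls * Lr - Lm\<^sup>2) / Ls * (Ls / (Ls * Lr - Lm\<^sup>2)
            * (- Rr * ir s + ur s - induced_rotor_flux_rate Lm Rs Ls (w s) (th s) (is s) (v s)))
          = - Rr * (ir s - irs) - Lm * iq s * (w s - w0)"
      using ur[OF \<open>s \<ge> 0\<close>] Ls_pos det_pos
      unfolding iq_def induced_rotor_flux_rate_eq[OF Ls_nonzero]
      by (simp add: field_simps)
    show "((\<lambda>s. w s - w0) has_real_derivative (- D * w s + Lm * ir s * iq s + um s) / M)
            (at s within {0..})"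
      using speed_deriv[OF \<open>s \<ge> 0\<close>] unfolding iq_def by (auto intro!: derivative_eq_intros)
    show "M * ((- D * w s + Lm * ir s * iq s + um s) / M)
          = - D * (w s - w0) + Lm * iq s * (ir s - irs)"
      unfolding um[OF \<open>s \<ge> 0\<close>] iq_def using M_pos by (simp add: field_simps)
  qed (use assms Ls_pos det_pos M_pos in auto)
  then show ?thesis by simp
qed

end

lemma machine_trajectory_of_solution:
  assumes "valid_params p" and "is_solution p w th lr ls v it is ir um ur"
  shows "machine_trajectory (pM p $ i) (pD p $ i) (pRr p $ i) (pLr p $ i) (pLm p $ i)
           (pRs p $ i) (pLs p $ i) (\<lambda>t. w t $ i) (\<lambda>t. th t $ i) (\<lambda>t. lr t $ i) (\<lambda>t. ir t $ i)
           (\<lambda>t. um t $ i) (\<lambda>t. ur t $ i) (\<lambda>t. ls t $ i) (\<lambda>t. is t $ i) (\<lambda>t. v t $ i)"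
proof
  show "pLs p $ i > 0" "pLs p $ i * pLr p $ i - (pLm p $ i)\<^sup>2 > 0" "pM p $ i > 0"
    using assms(1) by (simp_all add: valid_params_def)
  fix t :: real assume "t \<ge> 0"
  then have sol: "currents p (th t) (lr t) (ls t) (is t) (ir t)"
      "(w has_vector_derivative
         (\<chi> i. (- pD p $ i * w t $ i - torque p (th t) (is t) (ir t) $ i + um t $ i) / pM p $ i))
         (at t within {0..})"
      "(th has_vector_derivative w t) (at t within {0..})"
      "(lr has_vector_derivative (\<chi> i. - pRr p $ i * ir t $ i + ur t $ i)) (at t within {0..})"
      "(ls has_vector_derivative (\<chi> i. - pRs p $ i *\<^sub>R is t $ i + v t $ i)) (at t within {0..})"
    using assms(2) by (simp_all add: is_solution_def)
  show "ls t $ i = pLs p $ i *\<^sub>R is t $ i + (pLm p $ i * ir t $ i) *\<^sub>R (rot (th t $ i) *v e1)"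
    "lr t $ i = pLr p $ i * ir t $ i + pLm p $ i * (is t $ i v* rot (th t $ i)) $ 1"
    using sol(1) by (simp_all add: currents_def)
  show "((\<lambda>t. w t $ i) has_real_derivative
          (- pD p $ i * w t $ i + pLm p $ i * ir t $ i * (is t $ i v* rot (th t $ i)) $ 2 + um t $ i)
          / pM p $ i) (at t within {0..})"
    using has_real_derivative_vec_nth[OF sol(2), of i] by (simp add: torque_def algebra_simps)
  show "((\<lambda>t. th t $ i) has_real_derivative w t $ i) (at t within {0..})"
    using has_real_derivative_vec_nth[OF sol(3)] .
  show "((\<lambda>t. lr t $ i) has_real_derivative - pRr p $ i * ir t $ i + ur t $ i) (at t within {0..})"
    using has_real_derivative_vec_nth[OF sol(4), of i] by simp
  show "((\<lambda>t. ls t $ i) has_vector_derivative - pRs p $ i *\<^sub>R is t $ i + v t $ i) (at t within {0..})"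
    using has_vector_derivative_vec_nth[OF sol(5), of i] by simp
qed

lemma star_inputs_if_on_manifold:
  assumes "valid_params p" and sol: "is_solution p w th lr ls v it is ir um ur"
    and on_manifold: "\<forall>t\<ge>0. in_Omega w0 irs (w t) (ir t)" and "t \<ge> 0"
  shows "um t = um_star p w0 irs (th t) (is t) \<and> ur t = ur_star p w0 irs (th t) (is t) (v t)"
proof -
  have "um t $ i = um_star p w0 irs (th t) (is t) $ i \<and>
        ur t $ i = ur_star p w0 irs (th t) (is t) (v t) $ i" for i
  proof -
    have "ir s $ i = irs $ i \<and> w s $ i = w0" if "s \<ge> 0" for s
      using on_manifold that by (simp add: in_Omega_def)
    from machine_trajectory.inputs_on_manifold
        [OF machine_trajectory_of_solution[OF assms(1) sol] this \<open>t \<ge> 0\<close>]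
    show ?thesis
      by (simp add: um_star_def ur_star_def induced_rotor_flux_rate_def)
  qed
  then show ?thesis by (simp add: vec_eq_iff)
qed

lemma on_manifold_if_star_inputs:
  assumes "valid_params p" and sol: "is_solution p w th lr ls v it is ir um ur"
    and star: "\<forall>t\<ge>0. um t = um_star p w0 irs (th t) (is t) \<and>
                      ur t = ur_star p w0 irs (th t) (is t) (v t)"
    and "in_Omega w0 irs (w 0) (ir 0)" and "t \<ge> 0"
  shows "in_Omega w0 irs (w t) (ir t)"
proof -
  have "ir t $ i = irs $ i \<and> w t $ i = w0" for i
  proof (rule machine_trajectory.manifold_invariant[OF machine_trajectory_of_solution[OF assms(1) sol]])
    show "pRr p $ i \<ge> 0" "pD p $ i \<ge> 0"
      using assms(1) by (simp_all add: valid_params_def less_imp_le)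
    show "ir 0 $ i = irs $ i" "w 0 $ i = w0"
      using \<open>in_Omega w0 irs (w 0) (ir 0)\<close> by (simp_all add: in_Omega_def)
  qed (use star \<open>t \<ge> 0\<close> in
         \<open>simp_all add: um_star_def ur_star_def induced_rotor_flux_rate_def\<close>)
  then show ?thesis by (simp add: in_Omega_def vec_eq_iff)
qed

theorem lemma1:
  fixes p :: "('n::finite, 'm::finite) params" and w0 :: real and irs :: "real^'n"
  assumes "valid_params p" and "w0 > 0" and "\<forall>i. irs $ i > 0"
  shows "(\<forall>w th lr ls v it is ir um ur.
            is_solution p w th lr ls v it is ir um ur \<and>
            (\<forall>t\<ge>0. in_Omega w0 irs (w t) (ir t))
            \<longrightarrow> (\<forall>t\<ge>0. um t = um_star p w0 irs (th t) (is t) \<and>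
                         ur t = ur_star p w0 irs (th t) (is t) (v t)))
       \<and> (\<forall>w th lr ls v it is ir um ur.
            is_solution p w th lr ls v it is ir um ur \<and>
            (\<forall>t\<ge>0. um t = um_star p w0 irs (th t) (is t) \<and>
                     ur t = ur_star p w0 irs (th t) (is t) (v t)) \<and>
            in_Omega w0 irs (w 0) (ir 0)
            \<longrightarrow> (\<forall>t\<ge>0. in_Omega w0 irs (w t) (ir t)))"
proof (rule conjI; (rule allI)+; rule impI; elim conjE)
  fix w th lr ls v it "is" ir um ur
  assume "is_solution p w th lr ls v it is ir um ur" and "\<forall>t\<ge>0. in_Omega w0 irs (w t) (ir t)"
  from star_inputs_if_on_manifold[OF assms(1) this]
  show "\<forall>t\<ge>0. um t = um_star p w0 irs (th t) (is t) \<and> ur t = ur_star p w0 irs (th t) (is t) (v t)"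
    by simp
next
  fix w th lr ls v it "is" ir um ur
  assume "is_solution p w th lr ls v it is ir um ur"
    and "\<forall>t\<ge>0. um t = um_star p w0 irs (th t) (is t) \<and> ur t = ur_star p w0 irs (th t) (is t) (v t)"
    and "in_Omega w0 irs (w 0) (ir 0)"
  from on_manifold_if_star_inputs[OF assms(1) this]
  show "\<forall>t\<ge>0. in_Omega w0 irs (w t) (ir t)"
    by simp
qed

end
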